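(* Let $\{B_j\}$ and $\{C_j\}$ be finite lists of operators on the fermionic Fock space on $n$ spin orbitals with the same cardinality, where each $B_j$ maps the $\eta$-electron subspace into the $\xi$-electron subspace and each $C_j$ is number-preserving. Then $$\max_{|\psi_\eta\rangle}\langle\psi_\eta|\sum_{j}B_j^\dagger C_j^\dagger C_jB_j|\psi_\eta\rangle\le\max_{|\psi_\eta\rangle}\langle\psi_\eta|\sum_{j}B_j^\dagger B_j|\psi_\eta\rangle\cdot\max_{k,\,|\phi_\xi\rangle}\langle\phi_\xi|C_k^\dagger C_k|\phi_\xi\rangle,$$ where $|\psi_\eta\rangle$ ranges over $\eta$-electron states and $|\phi_\xi\rangle$ over $\xi$-electron states. In terms of the fermionic seminorm, $$\Big\|\sum_{j}B_j^\dagger C_j^\dagger C_jB_j\Big\|_{\eta}\le\Big\|\sum_{j}B_j^\dagger B_j\Big\|_{\eta}\max_k\|C_k^\dagger C_k\|_{\xi}.$$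
   Context: Fermionic Fock space on $n$ spin orbitals: the $2^n$-dimensional Hilbert space with orthonormal basis $|c_0,\dots,c_{n-1}\rangle$, $c_j\in\{0,1\}$, with creation operators $A_j^\dagger|\dots,0_j,\dots\rangle=(-1)^{\sum_{k<j}c_k}|\dots,1_j,\dots\rangle$, $A_j^\dagger|\dots,1_j,\dots\rangle=0$, annihilation operators $A_j=(A_j^\dagger)^\dagger$, $N=\sum_jA_j^\dagger A_j$. An operator is number-preserving if it commutes with $N$. The $\eta$-electron subspace is the span of basis vectors with $\sum_jc_j=\eta$; $\eta$-electron states are unit vectors in it. For an operator $Y$, $\|Y\|_\eta=\max_{|\psi_\eta\rangle,|\phi_\eta\rangle}|\langle\phi_\eta|Y|\psi_\eta\rangle|$ over $\eta$-electron states. *)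

theory Defs
  imports "Jordan_Normal_Form.Matrix"
begin

text \<open>Fermionic Fock space on n spin orbitals: complex vectors of dimension 2^n.
  Basis index i (i < 2^n) encodes the occupation vector c_j = bit i j (j < n).
  Operators are 2^n x 2^n complex matrices.\<close>

definition fock_dim :: "nat \<Rightarrow> nat" where
  "fock_dim n = 2 ^ n"

definition occ_num :: "nat \<Rightarrow> nat \<Rightarrow> nat" where
  "occ_num n i = card {j. j < n \<and> bit i j}"

definition adj :: "complex mat \<Rightarrow> complex mat" where
  "adj A = mat (dim_col A) (dim_row A) (\<lambda>(i, j). cnj (A $$ (j, i)))"

definition creation :: "nat \<Rightarrow> nat \<Rightarrow> complex mat" where
  "creation n j = mat (fock_dim n) (fock_dim n)
     (\<lambda>(r, c). if \<not> bit c j \<and> r = c + 2 ^ j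
               then (-1) ^ card {k. k < j \<and> bit c k} else 0)"

definition annihilation :: "nat \<Rightarrow> nat \<Rightarrow> complex mat" where
  "annihilation n j = adj (creation n j)"

definition msum :: "nat \<Rightarrow> complex mat list \<Rightarrow> complex mat" where
  "msum d Ms = foldr (+) Ms (0\<^sub>m d d)"

definition number_op :: "nat \<Rightarrow> complex mat" where
  "number_op n = msum (fock_dim n) (map (\<lambda>j. creation n j * annihilation n j) [0..<n])"

definition number_preserving :: "nat \<Rightarrow> complex mat \<Rightarrow> bool" where
  "number_preserving n C \<longleftrightarrow> C \<in> carrier_mat (fock_dim n) (fock_dim n) \<and>
     C * number_op n = number_op n * C"

definition electron_subspace :: "nat \<Rightarrow> nat \<Rightarrow> complex vec set" where
  "electron_subspace n \<eta> = {v \<in> carrier_vec (fock_dim n).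
     \<forall>i < fock_dim n. v $ i \<noteq> 0 \<longrightarrow> occ_num n i = \<eta>}"

definition electron_states :: "nat \<Rightarrow> nat \<Rightarrow> complex vec set" where
  "electron_states n \<eta> = {v \<in> electron_subspace n \<eta>. v \<bullet>c v = 1}"

text \<open>Matrix element <phi|Y|psi> (inner product antilinear in the first slot).\<close>
definition braket :: "complex vec \<Rightarrow> complex mat \<Rightarrow> complex vec \<Rightarrow> complex" where
  "braket \<phi> Y \<psi> = (Y *\<^sub>v \<psi>) \<bullet>c \<phi>"

definition fermi_norm :: "nat \<Rightarrow> nat \<Rightarrow> complex mat \<Rightarrow> real" where
  "fermi_norm n \<eta> Y = Sup {cmod (braket \<phi> Y \<psi>) | \<phi> \<psi>.
      \<phi> \<in> electron_states n \<eta> \<and> \<psi> \<in> electron_states n \<eta>}"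

end

theory Submission
  imports Defs
begin

text \<open>
  Write the operators as Gram sums \<open>\<Sum>\<^sub>j A\<^sub>j\<^sup>\<dagger> A\<^sub>j\<close>, so that
  \<open>\<langle>\<psi>|\<Sum>\<^sub>j B\<^sub>j\<^sup>\<dagger> C\<^sub>j\<^sup>\<dagger> C\<^sub>j B\<^sub>j|\<psi>\<rangle> = \<Sum>\<^sub>j \<parallel>C\<^sub>j B\<^sub>j \<psi>\<parallel>\<^sup>2\<close>.
  Since \<open>B\<^sub>j \<psi>\<close> lies in the \<open>\<xi>\<close>-electron subspace, normalising it shows
  \<open>\<parallel>C\<^sub>j B\<^sub>j \<psi>\<parallel>\<^sup>2 \<le> \<mu> \<parallel>B\<^sub>j \<psi>\<parallel>\<^sup>2\<close> for any bound \<open>\<mu>\<close> on the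
  expectation values of the \<open>C\<^sub>k\<^sup>\<dagger> C\<^sub>k\<close> over \<open>\<xi>\<close>-electron states; summing gives the
  bound on expectation values. For the seminorm, the off-diagonal matrix elements of a Gram sum
  are controlled by the diagonal ones, \<open>2|\<langle>\<phi>|G|\<psi>\<rangle>| \<le> \<langle>\<phi>|G|\<phi>\<rangle> + \<langle>\<psi>|G|\<psi>\<rangle>\<close>
  (AM-GM termwise), so it suffices again to compare expectation values.
\<close>

lemma cscalar_prod_eq_sum:
  assumes "y \<in> carrier_vec d"
  shows "x \<bullet>c y = (\<Sum>i<d. x $ i * cnj (y $ i))"
  using assms unfolding scalar_prod_def by (auto simp: atLeast0LessThan)

lemma mult_mat_vec_index_eq_sum:
  assumes "A \<in> carrier_mat d d" "x \<in> carrier_vec d" "i < d"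
  shows "(A *\<^sub>v x) $ i = (\<Sum>k<d. A $$ (i, k) * x $ k)"
  using assms by (auto simp: scalar_prod_def atLeast0LessThan intro!: sum.cong)

lemma adj_carrier [simp]: "A \<in> carrier_mat a b \<Longrightarrow> adj A \<in> carrier_mat b a"
  unfolding adj_def by auto

lemma index_adj [simp]:
  "A \<in> carrier_mat a b \<Longrightarrow> i < b \<Longrightarrow> k < a \<Longrightarrow> adj A $$ (i, k) = cnj (A $$ (k, i))"
  unfolding adj_def by auto

lemma adj_mult_mat:
  assumes "A \<in> carrier_mat a b" "B \<in> carrier_mat b c"
  shows "adj (A * B) = adj B * adj A"
  using assms unfolding adj_def
  by (intro eq_matI) (auto simp: scalar_prod_def cnj_sum mult.commute intro!: sum.cong)

lemma adj_mult_mat_vec_cscalar_prod: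
  assumes A: "A \<in> carrier_mat d d" and x: "x \<in> carrier_vec d" and y: "y \<in> carrier_vec d"
  shows "(adj A *\<^sub>v x) \<bullet>c y = x \<bullet>c (A *\<^sub>v y)"
proof -
  have "(adj A *\<^sub>v x) \<bullet>c y = (\<Sum>i<d. \<Sum>k<d. x $ k * cnj (A $$ (k, i) * y $ i))"
    using A x y
    by (simp add: cscalar_prod_eq_sum mult_mat_vec_index_eq_sum[of "adj A" d] sum_distrib_right
        mult.assoc mult.left_commute)
  also have "\<dots> = (\<Sum>k<d. \<Sum>i<d. x $ k * cnj (A $$ (k, i) * y $ i))"
    by (rule sum.swap)
  also have "\<dots> = x \<bullet>c (A *\<^sub>v y)"
    using A y by (simp add: cscalar_prod_eq_sum[of "A *\<^sub>v y" d] mult_mat_vec_index_eq_sum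
        sum_distrib_left cnj_sum del: index_mult_mat_vec)
  finally show ?thesis .
qed

definition vec_norm_sq :: "complex vec \<Rightarrow> real" where
  "vec_norm_sq x = (\<Sum>i<dim_vec x. (cmod (x $ i))\<^sup>2)"

lemma vec_norm_sq_nonneg: "0 \<le> vec_norm_sq x"
  unfolding vec_norm_sq_def by (auto intro: sum_nonneg)

lemma cscalar_prod_self: "x \<bullet>c x = complex_of_real (vec_norm_sq x)"
  unfolding vec_norm_sq_def scalar_prod_def
  by (auto simp: atLeast0LessThan complex_norm_square[symmetric] intro!: sum.cong)

lemma vec_norm_sq_smult: "vec_norm_sq (c \<cdot>\<^sub>v x) = (cmod c)\<^sup>2 * vec_norm_sq x"
  unfolding vec_norm_sq_def by (simp add: norm_mult power_mult_distrib sum_distrib_left)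

lemma vec_norm_sq_eq_0_imp_zero:
  assumes "x \<in> carrier_vec d" "vec_norm_sq x = 0"
  shows "x = 0\<^sub>v d"
proof -
  have "\<forall>i\<in>{..<dim_vec x}. (cmod (x $ i))\<^sup>2 = 0"
    using assms(2) unfolding vec_norm_sq_def by (subst sum_nonneg_eq_0_iff[symmetric]) auto
  then show ?thesis using assms(1) by (intro eq_vecI) auto
qed

lemma cmod_cscalar_prod_le:
  assumes "x \<in> carrier_vec d" "y \<in> carrier_vec d"
  shows "2 * cmod (x \<bullet>c y) \<le> vec_norm_sq x + vec_norm_sq y"
proof -
  have "2 * cmod (x \<bullet>c y) \<le> (\<Sum>i<d. 2 * cmod (x $ i * cnj (y $ i)))"
    unfolding cscalar_prod_eq_sum[OF assms(2)] sum_distrib_left[symmetric]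
    by (simp add: norm_sum)
  also have "\<dots> \<le> (\<Sum>i<d. (cmod (x $ i))\<^sup>2 + (cmod (y $ i))\<^sup>2)"
  proof (rule sum_mono)
    fix i
    have "0 \<le> (cmod (x $ i) - cmod (y $ i))\<^sup>2" by simp
    then show "2 * cmod (x $ i * cnj (y $ i)) \<le> (cmod (x $ i))\<^sup>2 + (cmod (y $ i))\<^sup>2"
      by (simp add: norm_mult power2_eq_square algebra_simps)
  qed
  also have "\<dots> = vec_norm_sq x + vec_norm_sq y"
    using assms unfolding vec_norm_sq_def by (simp add: sum.distrib)
  finally show ?thesis .
qed

lemma norm_sum_list_le: "norm (sum_list xs) \<le> (\<Sum>x\<leftarrow>xs. norm x)"
  by (induction xs) (auto intro: order_trans[OF norm_triangle_ineq])

lemma Re_sum_list: "Re (sum_list xs) = (\<Sum>x\<leftarrow>xs. Re x)"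
  by (induction xs) auto

lemma braket_adj_mult:
  assumes "A \<in> carrier_mat d d" "M \<in> carrier_mat d d" "\<phi> \<in> carrier_vec d" "\<psi> \<in> carrier_vec d"
  shows "braket \<phi> (adj A * M) \<psi> = (M *\<^sub>v \<psi>) \<bullet>c (A *\<^sub>v \<phi>)"
  unfolding braket_def using assms
  by (simp add: assoc_mult_mat_vec[of _ d d _ d] adj_mult_mat_vec_cscalar_prod[of A d])

lemma braket_add:
  assumes "M \<in> carrier_mat d d" "N \<in> carrier_mat d d" "\<phi> \<in> carrier_vec d" "\<psi> \<in> carrier_vec d"
  shows "braket \<phi> (M + N) \<psi> = braket \<phi> M \<psi> + braket \<phi> N \<psi>"
  unfolding braket_def using assms
  by (simp add: add_mult_distrib_mat_vec[of _ d d] add_scalar_prod_distrib[of _ d])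

lemma msum_Nil [simp]: "msum d [] = 0\<^sub>m d d"
  by (simp add: msum_def)

lemma msum_Cons [simp]: "msum d (M # Ms) = M + msum d Ms"
  by (simp add: msum_def)

lemma msum_carrier: "\<forall>M\<in>set Ms. M \<in> carrier_mat d d \<Longrightarrow> msum d Ms \<in> carrier_mat d d"
  by (induction Ms) auto

lemma braket_msum:
  assumes "\<forall>M\<in>set Ms. M \<in> carrier_mat d d" "\<phi> \<in> carrier_vec d" "\<psi> \<in> carrier_vec d"
  shows "braket \<phi> (msum d Ms) \<psi> = (\<Sum>M\<leftarrow>Ms. braket \<phi> M \<psi>)"
  using assms(1)
proof (induction Ms)
  case Nil
  have "0\<^sub>m d d *\<^sub>v \<psi> = 0\<^sub>v d"
    using assms(3) by (intro eq_vecI) (auto simp: scalar_prod_def)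
  then show ?case using assms(2) by (simp add: braket_def)
next
  case (Cons M Ms)
  then have "msum d Ms \<in> carrier_mat d d" by (simp add: msum_carrier)
  with Cons assms(2,3) show ?case by (simp add: braket_add[of M d])
qed

definition gram_sum :: "nat \<Rightarrow> complex mat list \<Rightarrow> complex mat" where
  "gram_sum d As = msum d (map (\<lambda>A. adj A * A) As)"

lemma gram_sum_carrier:
  "\<forall>A\<in>set As. A \<in> carrier_mat d d \<Longrightarrow> gram_sum d As \<in> carrier_mat d d"
  unfolding gram_sum_def by (rule msum_carrier) (auto intro!: mult_carrier_mat)

lemma braket_gram_sum:
  assumes "\<forall>A\<in>set As. A \<in> carrier_mat d d" "\<phi> \<in> carrier_vec d" "\<psi> \<in> carrier_vec d"
  shows "braket \<phi> (gram_sum d As) \<psi> = (\<Sum>A\<leftarrow>As. (A *\<^sub>v \<psi>) \<bullet>c (A *\<^sub>v \<phi>))"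
proof -
  have "\<forall>M\<in>set (map (\<lambda>A. adj A * A) As). M \<in> carrier_mat d d"
    using assms(1) by (auto intro!: mult_carrier_mat)
  then have "braket \<phi> (gram_sum d As) \<psi> = (\<Sum>A\<leftarrow>As. braket \<phi> (adj A * A) \<psi>)"
    unfolding gram_sum_def by (simp add: braket_msum[OF _ assms(2,3)] o_def)
  also have "\<dots> = (\<Sum>A\<leftarrow>As. (A *\<^sub>v \<psi>) \<bullet>c (A *\<^sub>v \<phi>))"
    using assms by (intro arg_cong[where f = sum_list] map_cong) (auto simp: braket_adj_mult[of _ d])
  finally show ?thesis .
qed

lemma Re_braket_gram_sum:
  assumes "\<forall>A\<in>set As. A \<in> carrier_mat d d" "\<psi> \<in> carrier_vec d"
  shows "Re (braket \<psi> (gram_sum d As) \<psi>) = (\<Sum>A\<leftarrow>As. vec_norm_sq (A *\<^sub>v \<psi>))"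
  unfolding braket_gram_sum[OF assms(1,2,2)]
  by (simp add: cscalar_prod_self Re_sum_list o_def)

lemma cmod_braket_gram_sum_le:
  assumes "\<forall>A\<in>set As. A \<in> carrier_mat d d" "\<phi> \<in> carrier_vec d" "\<psi> \<in> carrier_vec d"
  shows "2 * cmod (braket \<phi> (gram_sum d As) \<psi>)
    \<le> Re (braket \<phi> (gram_sum d As) \<phi>) + Re (braket \<psi> (gram_sum d As) \<psi>)"
proof -
  have "2 * cmod (braket \<phi> (gram_sum d As) \<psi>)
      \<le> (\<Sum>A\<leftarrow>As. 2 * cmod ((A *\<^sub>v \<psi>) \<bullet>c (A *\<^sub>v \<phi>)))"
    unfolding braket_gram_sum[OF assms] sum_list_const_mult
    using norm_sum_list_le[of "map (\<lambda>A. (A *\<^sub>v \<psi>) \<bullet>c (A *\<^sub>v \<phi>)) As"] by (simp add: o_def)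
  also have "\<dots> \<le> (\<Sum>A\<leftarrow>As. vec_norm_sq (A *\<^sub>v \<psi>) + vec_norm_sq (A *\<^sub>v \<phi>))"
    using assms by (intro sum_list_mono cmod_cscalar_prod_le[of _ d]) auto
  finally show ?thesis
    unfolding Re_braket_gram_sum[OF assms(1,2)] Re_braket_gram_sum[OF assms(1,3)] sum_list_addf
    by linarith
qed

lemma msum_adj_comp_eq_gram_sum:
  assumes "\<forall>(B, C)\<in>set P. B \<in> carrier_mat d d \<and> C \<in> carrier_mat d d"
  shows "msum d (map (\<lambda>(B, C). adj B * adj C * C * B) P) = gram_sum d (map (\<lambda>(B, C). C * B) P)"
proof -
  have "adj B * adj C * C * B = adj (C * B) * (C * B)"
    if B: "B \<in> carrier_mat d d" and C: "C \<in> carrier_mat d d" for B C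
    using assoc_mult_mat[OF mult_carrier_mat[OF adj_carrier[OF B] adj_carrier[OF C]] C B]
    by (simp add: adj_mult_mat[OF C B])
  then show ?thesis
    unfolding gram_sum_def map_map using assms
    by (intro arg_cong[where f = "msum d"] map_cong) auto
qed

lemma electron_statesD:
  assumes "\<phi> \<in> electron_states n k"
  shows "\<phi> \<in> carrier_vec (fock_dim n)" "vec_norm_sq \<phi> = 1" "\<phi> \<in> electron_subspace n k"
  using assms unfolding electron_states_def electron_subspace_def by (auto simp: cscalar_prod_self)

lemma electron_states_nonempty:
  assumes "k \<le> n"
  shows "electron_states n k \<noteq> {}"
proof -
  define j :: nat where "j = mask k"
  have "j < 2 ^ k" by (simp add: j_def mask_eq_exp_minus_1)
  also have "(2::nat) ^ k \<le> fock_dim n"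
    unfolding fock_dim_def using assms by (rule power_increasing) simp
  finally have "j < fock_dim n" .
  moreover have "occ_num n j = k"
  proof -
    have "{i. i < n \<and> bit j i} = {..<k}"
      using assms unfolding j_def by (auto simp: bit_mask_iff)
    then show ?thesis unfolding occ_num_def by simp
  qed
  ultimately have "unit_vec (fock_dim n) j \<in> electron_states n k"
    unfolding electron_states_def electron_subspace_def by (auto simp: scalar_prod_left_unit)
  then show ?thesis by blast
qed

lemma smult_electron_subspace:
  "x \<in> electron_subspace n k \<Longrightarrow> c \<cdot>\<^sub>v x \<in> electron_subspace n k"
  unfolding electron_subspace_def by auto

lemma Re_braket_adj_mult_self:
  assumes "C \<in> carrier_mat d d" "\<phi> \<in> carrier_vec d"
  shows "Re (braket \<phi> (adj C * C) \<phi>) = vec_norm_sq (C *\<^sub>v \<phi>)"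
  using assms by (simp add: braket_adj_mult cscalar_prod_self)

lemma Re_braket_adj_mult_self_nonneg:
  "C \<in> carrier_mat d d \<Longrightarrow> \<phi> \<in> carrier_vec d \<Longrightarrow> 0 \<le> Re (braket \<phi> (adj C * C) \<phi>)"
  by (simp add: Re_braket_adj_mult_self vec_norm_sq_nonneg)

lemma vec_norm_sq_mult_le_on_electron_subspace:
  assumes C: "C \<in> carrier_mat (fock_dim n) (fock_dim n)" and x: "x \<in> electron_subspace n k"
    and bound: "\<forall>\<phi>\<in>electron_states n k. Re (braket \<phi> (adj C * C) \<phi>) \<le> \<mu>"
  shows "vec_norm_sq (C *\<^sub>v x) \<le> \<mu> * vec_norm_sq x"
proof (cases "vec_norm_sq x = 0")
  case True
  have "x \<in> carrier_vec (fock_dim n)" using x unfolding electron_subspace_def by auto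
  with True have "C *\<^sub>v x = 0\<^sub>v (fock_dim n)"
    using C by (auto dest: vec_norm_sq_eq_0_imp_zero intro!: eq_vecI simp: scalar_prod_def)
  with True show ?thesis by (simp add: vec_norm_sq_def)
next
  case False
  then have pos: "vec_norm_sq x > 0" using vec_norm_sq_nonneg[of x] by simp
  define c where "c = complex_of_real (1 / sqrt (vec_norm_sq x))"
  have c: "(cmod c)\<^sup>2 = 1 / vec_norm_sq x"
    using pos by (simp add: c_def norm_divide power_divide)
  have xc: "x \<in> carrier_vec (fock_dim n)" using x unfolding electron_subspace_def by auto
  have "c \<cdot>\<^sub>v x \<in> electron_states n k"
    using smult_electron_subspace[OF x] pos
    by (simp add: electron_states_def cscalar_prod_self vec_norm_sq_smult c)
  then have "Re (braket (c \<cdot>\<^sub>v x) (adj C * C) (c \<cdot>\<^sub>v x)) \<le> \<mu>" using bound by blast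
  moreover have "Re (braket (c \<cdot>\<^sub>v x) (adj C * C) (c \<cdot>\<^sub>v x)) = vec_norm_sq (C *\<^sub>v x) / vec_norm_sq x"
    using C xc by (simp add: Re_braket_adj_mult_self mult_mat_vec vec_norm_sq_smult c)
  ultimately show ?thesis using pos by (simp add: divide_le_eq mult.commute)
qed

lemma cmod_braket_le_entry_sum:
  assumes M: "M \<in> carrier_mat d d" and \<phi>: "\<phi> \<in> carrier_vec d" "vec_norm_sq \<phi> = 1"
    and \<psi>: "\<psi> \<in> carrier_vec d" "vec_norm_sq \<psi> = 1"
  shows "cmod (braket \<phi> M \<psi>) \<le> (\<Sum>i<d. \<Sum>k<d. cmod (M $$ (i, k)))"
proof -
  have entry_le_1: "cmod (v $ i) \<le> 1" if "v \<in> carrier_vec d" "vec_norm_sq v = 1" "i < d" for v i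
  proof -
    have "(cmod (v $ i))\<^sup>2 \<le> vec_norm_sq v"
      unfolding vec_norm_sq_def using that by (intro member_le_sum) auto
    with that(2) have "(cmod (v $ i))\<^sup>2 \<le> 1\<^sup>2" by simp
    then show ?thesis by (rule power2_le_imp_le) simp
  qed
  have "braket \<phi> M \<psi> = (\<Sum>i<d. \<Sum>k<d. M $$ (i, k) * \<psi> $ k * cnj (\<phi> $ i))"
    unfolding braket_def cscalar_prod_eq_sum[OF \<phi>(1)] using M \<psi>
    by (simp add: mult_mat_vec_index_eq_sum sum_distrib_right del: index_mult_mat_vec)
  then have "cmod (braket \<phi> M \<psi>) \<le> (\<Sum>i<d. \<Sum>k<d. cmod (M $$ (i, k) * \<psi> $ k * cnj (\<phi> $ i)))"
    by (auto intro: order_trans[OF norm_sum] sum_mono norm_sum)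
  also have "\<dots> \<le> (\<Sum>i<d. \<Sum>k<d. cmod (M $$ (i, k)))"
    using entry_le_1[OF \<phi>] entry_le_1[OF \<psi>]
    by (intro sum_mono) (simp add: norm_mult mult.assoc mult_le_one mult_left_le)
  finally show ?thesis .
qed

lemma cmod_braket_le_fermi_norm:
  assumes "M \<in> carrier_mat (fock_dim n) (fock_dim n)"
    and "\<phi> \<in> electron_states n k" "\<psi> \<in> electron_states n k"
  shows "cmod (braket \<phi> M \<psi>) \<le> fermi_norm n k M"
  unfolding fermi_norm_def
proof (rule cSup_upper)
  show "bdd_above {cmod (braket \<phi> M \<psi>) | \<phi> \<psi>. \<phi> \<in> electron_states n k \<and> \<psi> \<in> electron_states n k}"
    using assms(1) cmod_braket_le_entry_sum electron_statesD
    by (intro bdd_aboveI[where M = "\<Sum>i<fock_dim n. \<Sum>k<fock_dim n. cmod (M $$ (i, k))"]) blast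
qed (use assms in blast)

lemma Re_braket_le_fermi_norm:
  assumes "M \<in> carrier_mat (fock_dim n) (fock_dim n)" "\<phi> \<in> electron_states n k"
  shows "Re (braket \<phi> M \<phi>) \<le> fermi_norm n k M"
  using cmod_braket_le_fermi_norm[OF assms assms(2)] complex_Re_le_cmod order_trans by blast

lemma Re_braket_adj_mult_self_le_Max_fermi_norm:
  assumes "finite Cs" "\<forall>C\<in>Cs. C \<in> carrier_mat (fock_dim n) (fock_dim n)"
  shows "\<forall>C\<in>Cs. \<forall>\<phi>\<in>electron_states n \<xi>.
    Re (braket \<phi> (adj C * C) \<phi>) \<le> Max ((\<lambda>C. fermi_norm n \<xi> (adj C * C)) ` Cs)"
proof (intro ballI)
  fix C \<phi> assume C: "C \<in> Cs" and \<phi>: "\<phi> \<in> electron_states n \<xi>"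
  have "adj C * C \<in> carrier_mat (fock_dim n) (fock_dim n)"
    using assms(2) C by (auto intro!: mult_carrier_mat)
  then show "Re (braket \<phi> (adj C * C) \<phi>) \<le> Max ((\<lambda>C. fermi_norm n \<xi> (adj C * C)) ` Cs)"
    using Re_braket_le_fermi_norm[OF _ \<phi>] assms(1) C by (auto intro: order_trans[OF _ Max_ge])
qed

lemma Re_braket_adj_mult_self_bound_nonneg:
  assumes "\<xi> \<le> n" "Cs \<noteq> {}" "\<forall>C\<in>Cs. C \<in> carrier_mat (fock_dim n) (fock_dim n)"
    and "\<forall>C\<in>Cs. \<forall>\<phi>\<in>electron_states n \<xi>. Re (braket \<phi> (adj C * C) \<phi>) \<le> \<mu>"
  shows "0 \<le> \<mu>"
proof -
  obtain C where C: "C \<in> Cs" using assms(2) by (meson ex_in_conv)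
  obtain \<phi> where \<phi>: "\<phi> \<in> electron_states n \<xi>"
    using electron_states_nonempty[OF assms(1)] by (meson ex_in_conv)
  have "0 \<le> Re (braket \<phi> (adj C * C) \<phi>)"
    using assms(3) C electron_statesD(1)[OF \<phi>] by (blast intro: Re_braket_adj_mult_self_nonneg)
  also have "\<dots> \<le> \<mu>" using assms(4) C \<phi> by blast
  finally show ?thesis .
qed

lemma Re_braket_gram_sum_comp_le:
  assumes carrier: "\<forall>(B, C)\<in>set P.
      B \<in> carrier_mat (fock_dim n) (fock_dim n) \<and> C \<in> carrier_mat (fock_dim n) (fock_dim n)"
    and maps: "\<forall>(B, C)\<in>set P. \<forall>v\<in>electron_subspace n \<eta>. B *\<^sub>v v \<in> electron_subspace n \<xi>"
    and bound: "\<forall>C\<in>snd ` set P. \<forall>\<phi>\<in>electron_states n \<xi>. Re (braket \<phi> (adj C * C) \<phi>) \<le> \<mu>"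
    and \<psi>: "\<psi> \<in> electron_states n \<eta>"
  shows "Re (braket \<psi> (gram_sum (fock_dim n) (map (\<lambda>(B, C). C * B) P)) \<psi>)
    \<le> \<mu> * Re (braket \<psi> (gram_sum (fock_dim n) (map fst P)) \<psi>)"
proof -
  have "\<forall>A\<in>set (map (\<lambda>(B, C). C * B) P). A \<in> carrier_mat (fock_dim n) (fock_dim n)"
    "\<forall>A\<in>set (map fst P). A \<in> carrier_mat (fock_dim n) (fock_dim n)"
    using carrier by auto
  note Re_gram = Re_braket_gram_sum[OF this(1) electron_statesD(1)[OF \<psi>]]
    Re_braket_gram_sum[OF this(2) electron_statesD(1)[OF \<psi>]]
  have "Re (braket \<psi> (gram_sum (fock_dim n) (map (\<lambda>(B, C). C * B) P)) \<psi>)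
      = (\<Sum>(B, C)\<leftarrow>P. vec_norm_sq (C *\<^sub>v (B *\<^sub>v \<psi>)))"
    unfolding Re_gram map_map using carrier electron_statesD(1)[OF \<psi>]
    by (intro arg_cong[where f = sum_list] map_cong)
      (auto simp: assoc_mult_mat_vec[of _ "fock_dim n" "fock_dim n" _ "fock_dim n"])
  also have "\<dots> \<le> (\<Sum>(B, C)\<leftarrow>P. \<mu> * vec_norm_sq (B *\<^sub>v \<psi>))"
  proof (rule sum_list_mono, clarify)
    fix B C assume "(B, C) \<in> set P"
    then show "vec_norm_sq (C *\<^sub>v (B *\<^sub>v \<psi>)) \<le> \<mu> * vec_norm_sq (B *\<^sub>v \<psi>)"
      using carrier maps bound electron_statesD(3)[OF \<psi>]
      by (intro vec_norm_sq_mult_le_on_electron_subspace) auto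
  qed
  also have "\<dots> = \<mu> * Re (braket \<psi> (gram_sum (fock_dim n) (map fst P)) \<psi>)"
    unfolding Re_gram by (simp add: sum_list_const_mult[symmetric] case_prod_beta' o_def)
  finally show ?thesis .
qed

lemma Sup_Re_braket_le_mult:
  assumes "\<eta> \<le> n" "Z \<in> carrier_mat (fock_dim n) (fock_dim n)" "0 \<le> \<mu>"
    and "\<forall>\<psi>\<in>electron_states n \<eta>. Re (braket \<psi> Y \<psi>) \<le> \<mu> * Re (braket \<psi> Z \<psi>)"
  shows "Sup {Re (braket \<psi> Y \<psi>) | \<psi>. \<psi> \<in> electron_states n \<eta>}
    \<le> Sup {Re (braket \<psi> Z \<psi>) | \<psi>. \<psi> \<in> electron_states n \<eta>} * \<mu>"
proof (rule cSup_least)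
  show "{Re (braket \<psi> Y \<psi>) | \<psi>. \<psi> \<in> electron_states n \<eta>} \<noteq> {}"
    using electron_states_nonempty[OF assms(1)] by blast
next
  fix x assume "x \<in> {Re (braket \<psi> Y \<psi>) | \<psi>. \<psi> \<in> electron_states n \<eta>}"
  then obtain \<psi> where \<psi>: "\<psi> \<in> electron_states n \<eta>" and x: "x = Re (braket \<psi> Y \<psi>)" by blast
  have "Re (braket \<psi> Z \<psi>) \<le> Sup {Re (braket \<psi> Z \<psi>) | \<psi>. \<psi> \<in> electron_states n \<eta>}"
    using \<psi> Re_braket_le_fermi_norm[OF assms(2)]
    by (intro cSup_upper) (auto intro!: bdd_aboveI[where M = "fermi_norm n \<eta> Z"])
  then have "\<mu> * Re (braket \<psi> Z \<psi>) \<le> \<mu> * Sup {Re (braket \<psi> Z \<psi>) | \<psi>. \<psi> \<in> electron_states n \<eta>}"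
    using assms(3) by (rule mult_left_mono)
  moreover have "x \<le> \<mu> * Re (braket \<psi> Z \<psi>)" using assms(4) \<psi> x by blast
  ultimately show "x \<le> Sup {Re (braket \<psi> Z \<psi>) | \<psi>. \<psi> \<in> electron_states n \<eta>} * \<mu>"
    by (simp add: mult.commute)
qed

lemma fermi_norm_gram_sum_le_mult:
  assumes "\<eta> \<le> n" "\<forall>A\<in>set As. A \<in> carrier_mat (fock_dim n) (fock_dim n)"
    and Z: "Z \<in> carrier_mat (fock_dim n) (fock_dim n)" and "0 \<le> \<mu>"
    and comp: "\<forall>\<psi>\<in>electron_states n \<eta>.
      Re (braket \<psi> (gram_sum (fock_dim n) As) \<psi>) \<le> \<mu> * Re (braket \<psi> Z \<psi>)"
  shows "fermi_norm n \<eta> (gram_sum (fock_dim n) As) \<le> fermi_norm n \<eta> Z * \<mu>"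
  unfolding fermi_norm_def[of n \<eta> "gram_sum (fock_dim n) As"]
proof (rule cSup_least)
  show "{cmod (braket \<phi> (gram_sum (fock_dim n) As) \<psi>) | \<phi> \<psi>.
      \<phi> \<in> electron_states n \<eta> \<and> \<psi> \<in> electron_states n \<eta>} \<noteq> {}"
    using electron_states_nonempty[OF assms(1)] by blast
next
  fix x assume "x \<in> {cmod (braket \<phi> (gram_sum (fock_dim n) As) \<psi>) | \<phi> \<psi>.
      \<phi> \<in> electron_states n \<eta> \<and> \<psi> \<in> electron_states n \<eta>}"
  then obtain \<phi> \<psi> where \<phi>: "\<phi> \<in> electron_states n \<eta>" and \<psi>: "\<psi> \<in> electron_states n \<eta>"
    and x: "x = cmod (braket \<phi> (gram_sum (fock_dim n) As) \<psi>)" by blast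
  have "2 * x \<le> Re (braket \<phi> (gram_sum (fock_dim n) As) \<phi>) + Re (braket \<psi> (gram_sum (fock_dim n) As) \<psi>)"
    unfolding x using assms(2) electron_statesD(1)[OF \<phi>] electron_statesD(1)[OF \<psi>]
    by (rule cmod_braket_gram_sum_le)
  also have "\<dots> \<le> \<mu> * Re (braket \<phi> Z \<phi>) + \<mu> * Re (braket \<psi> Z \<psi>)"
    using comp \<phi> \<psi> by (intro add_mono) auto
  also have "\<dots> \<le> \<mu> * fermi_norm n \<eta> Z + \<mu> * fermi_norm n \<eta> Z"
    using Re_braket_le_fermi_norm[OF Z] \<phi> \<psi> \<open>0 \<le> \<mu>\<close> by (intro add_mono mult_left_mono) auto
  finally show "x \<le> fermi_norm n \<eta> Z * \<mu>" by (simp add: mult.commute)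
qed

lemma Sup_Re_braket_gram_sum_comp_le:
  assumes "\<eta> \<le> n" "\<xi> \<le> n" "P \<noteq> []"
    and carrier: "\<forall>(B, C)\<in>set P.
      B \<in> carrier_mat (fock_dim n) (fock_dim n) \<and> C \<in> carrier_mat (fock_dim n) (fock_dim n)"
    and maps: "\<forall>(B, C)\<in>set P. \<forall>v\<in>electron_subspace n \<eta>. B *\<^sub>v v \<in> electron_subspace n \<xi>"
  shows "Sup {Re (braket \<psi> (gram_sum (fock_dim n) (map (\<lambda>(B, C). C * B) P)) \<psi>)
      | \<psi>. \<psi> \<in> electron_states n \<eta>}
    \<le> Sup {Re (braket \<psi> (gram_sum (fock_dim n) (map fst P)) \<psi>) | \<psi>. \<psi> \<in> electron_states n \<eta>}
      * Sup {Re (braket \<phi> (adj C * C) \<phi>) | C \<phi>. C \<in> snd ` set P \<and> \<phi> \<in> electron_states n \<xi>}"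
    (is "_ \<le> _ * Sup ?S")
proof -
  have snd_carrier: "\<forall>C\<in>snd ` set P. C \<in> carrier_mat (fock_dim n) (fock_dim n)"
    and fst_carrier: "\<forall>B\<in>set (map fst P). B \<in> carrier_mat (fock_dim n) (fock_dim n)"
    using carrier by force+
  note Max_ub = Re_braket_adj_mult_self_le_Max_fermi_norm[OF finite_imageI[OF finite_set] snd_carrier]
  note nonneg = Re_braket_adj_mult_self_bound_nonneg[OF assms(2) _ snd_carrier]
  have "bdd_above ?S"
    using Max_ub by (intro bdd_aboveI) blast
  then have ub: "\<forall>C\<in>snd ` set P. \<forall>\<phi>\<in>electron_states n \<xi>. Re (braket \<phi> (adj C * C) \<phi>) \<le> Sup ?S"
    by (intro ballI cSup_upper) blast+
  show ?thesis
    using Sup_Re_braket_le_mult[OF assms(1) gram_sum_carrier[OF fst_carrier]] nonneg[OF _ ub]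
      Re_braket_gram_sum_comp_le[OF carrier maps ub] assms(3) by simp
qed

lemma fermi_norm_gram_sum_comp_le:
  assumes "\<eta> \<le> n" "\<xi> \<le> n" "P \<noteq> []"
    and carrier: "\<forall>(B, C)\<in>set P.
      B \<in> carrier_mat (fock_dim n) (fock_dim n) \<and> C \<in> carrier_mat (fock_dim n) (fock_dim n)"
    and maps: "\<forall>(B, C)\<in>set P. \<forall>v\<in>electron_subspace n \<eta>. B *\<^sub>v v \<in> electron_subspace n \<xi>"
  shows "fermi_norm n \<eta> (gram_sum (fock_dim n) (map (\<lambda>(B, C). C * B) P))
    \<le> fermi_norm n \<eta> (gram_sum (fock_dim n) (map fst P))
      * Max ((\<lambda>C. fermi_norm n \<xi> (adj C * C)) ` snd ` set P)"
proof -
  have snd_carrier: "\<forall>C\<in>snd ` set P. C \<in> carrier_mat (fock_dim n) (fock_dim n)"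
    and fst_carrier: "\<forall>B\<in>set (map fst P). B \<in> carrier_mat (fock_dim n) (fock_dim n)"
    using carrier by force+
  note Max_ub = Re_braket_adj_mult_self_le_Max_fermi_norm[OF finite_imageI[OF finite_set] snd_carrier]
  note nonneg = Re_braket_adj_mult_self_bound_nonneg[OF assms(2) _ snd_carrier]
  have "\<forall>A\<in>set (map (\<lambda>(B, C). C * B) P). A \<in> carrier_mat (fock_dim n) (fock_dim n)"
    using carrier by force
  then show ?thesis
    using fermi_norm_gram_sum_le_mult[OF assms(1) _ gram_sum_carrier[OF fst_carrier]] nonneg[OF _ Max_ub]
      Re_braket_gram_sum_comp_le[OF carrier maps Max_ub] assms(3) by simp
qed

theorem lemma3:
  fixes n \<eta> \<xi> :: nat and Bs Cs :: "complex mat list"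
  assumes "\<eta> \<le> n" and "\<xi> \<le> n"
    and "length Bs = length Cs" and "Cs \<noteq> []"
    and "\<forall>B \<in> set Bs. B \<in> carrier_mat (fock_dim n) (fock_dim n) \<and>
           (\<forall>v \<in> electron_subspace n \<eta>. B *\<^sub>v v \<in> electron_subspace n \<xi>)"
    and "\<forall>C \<in> set Cs. number_preserving n C"
  shows "Sup {Re (braket \<psi> (msum (fock_dim n)
                  (map (\<lambda>(B, C). adj B * adj C * C * B) (zip Bs Cs))) \<psi>)
              | \<psi>. \<psi> \<in> electron_states n \<eta>}
         \<le> Sup {Re (braket \<psi> (msum (fock_dim n) (map (\<lambda>B. adj B * B) Bs)) \<psi>)
              | \<psi>. \<psi> \<in> electron_states n \<eta>}
           * Sup {Re (braket \<phi> (adj C * C) \<phi>)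
              | C \<phi>. C \<in> set Cs \<and> \<phi> \<in> electron_states n \<xi>}
       \<and> fermi_norm n \<eta> (msum (fock_dim n)
              (map (\<lambda>(B, C). adj B * adj C * C * B) (zip Bs Cs)))
         \<le> fermi_norm n \<eta> (msum (fock_dim n) (map (\<lambda>B. adj B * B) Bs))
           * Max ((\<lambda>C. fermi_norm n \<xi> (adj C * C)) ` set Cs)"
proof -
  define P where "P = zip Bs Cs"
  have "P \<noteq> []"
    using assms(3,4) unfolding P_def by (auto simp: zip_eq_Nil_iff)
  have Cs: "set Cs = snd ` set P"
    using map_snd_zip[OF assms(3)] unfolding P_def by (simp flip: set_map)
  have carrier: "\<forall>(B, C)\<in>set P.
      B \<in> carrier_mat (fock_dim n) (fock_dim n) \<and> C \<in> carrier_mat (fock_dim n) (fock_dim n)"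
    and maps: "\<forall>(B, C)\<in>set P. \<forall>v\<in>electron_subspace n \<eta>. B *\<^sub>v v \<in> electron_subspace n \<xi>"
    using assms(5,6) unfolding P_def number_preserving_def by (auto dest: set_zip_leftD set_zip_rightD)
  have Y: "msum (fock_dim n) (map (\<lambda>(B, C). adj B * adj C * C * B) (zip Bs Cs))
      = gram_sum (fock_dim n) (map (\<lambda>(B, C). C * B) P)"
    using msum_adj_comp_eq_gram_sum[OF carrier] unfolding P_def .
  have Z: "msum (fock_dim n) (map (\<lambda>B. adj B * B) Bs) = gram_sum (fock_dim n) (map fst P)"
    using map_fst_zip[OF assms(3)] unfolding P_def gram_sum_def by simp
  show ?thesis
    unfolding Y Z Cs
    using Sup_Re_braket_gram_sum_comp_le[OF assms(1,2) \<open>P \<noteq> []\<close> carrier maps]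
      fermi_norm_gram_sum_comp_le[OF assms(1,2) \<open>P \<noteq> []\<close> carrier maps] ..
qed

end
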